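(* Let $n\ge 3$ and let $p\neq q$ be integers such that there is a permutation $\pi$ of $\{1,\ldots,n\}$ whose discrete derivative takes exactly the values $p$ and $q$, i.e. $\{\pi_{i+1}-\pi_i : 1\le i\le n-1\}=\{p,q\}$. Then $p$ and $q$ have opposite signs, and $p$ and $q$ are relatively prime.
   Context: For a permutation $\pi=(\pi_1,\ldots,\pi_n)$ of $\{1,\ldots,n\}$, its discrete derivative is $D(\pi)=(\pi_2-\pi_1,\ldots,\pi_n-\pi_{n-1})$. A pair $(p,q)$ of distinct integers is called a $D$-pair if for some $n\ge 1$ there is a permutation $\pi$ of $\{1,\ldots,n\}$ whose set of discrete derivative values equals $\{p,q\}$. *)

theory Defs
  imports Main
begin

definition is_perm :: "nat \<Rightarrow> (nat \<Rightarrow> int) \<Rightarrow> bool" where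
  "is_perm n pi \<longleftrightarrow> bij_betw pi {1..n} {1..int n}"

definition deriv_values :: "nat \<Rightarrow> (nat \<Rightarrow> int) \<Rightarrow> int set" where
  "deriv_values n pi = {pi (i + 1) - pi i | i. 1 \<le> i \<and> i \<le> n - 1}"

end

theory Submission
  imports Defs
begin

(* A zero step would contradict injectivity.  If both steps had the same sign, pi would be
   strictly monotone; but a strictly increasing integer sequence of length n whose total rise
   is at most n - 1 increases by exactly 1 at every step, forcing p = q.  For coprimality, every value of pi
   is congruent to pi 1 modulo gcd p q, in particular 1 and 2 are, so gcd p q divides 1. *)

lemma dvd_diff_if_dvd_steps:
  fixes f :: "nat \<Rightarrow> 'a::comm_ring_1"
  assumes steps: "\<And>i. i \<in> {j..<k} \<Longrightarrow> d dvd f (Suc i) - f i"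
    and "a \<in> {j..k}" and "b \<in> {j..k}"
  shows "d dvd f b - f a"
proof -
  have from_start: "d dvd f c - f j" if "c \<in> {j..k}" for c
  proof -
    have "d dvd (\<Sum>i = j..<c. f (Suc i) - f i)"
      using that by (intro dvd_sum steps) auto
    then show ?thesis
      using that by (simp add: sum_Suc_diff')
  qed
  have "d dvd (f b - f j) - (f a - f j)"
    using from_start[OF assms(3)] from_start[OF assms(2)] by (rule dvd_diff)
  then show ?thesis by simp
qed

lemma unit_step_if_increasing_steps:
  fixes f :: "nat \<Rightarrow> int"
  assumes rise: "f k - f j \<le> int (k - j)"
    and increasing: "\<And>i. i \<in> {j..<k} \<Longrightarrow> f i < f (Suc i)"
    and "i \<in> {j..<k}"
  shows "f (Suc i) = f i + 1"
proof -
  have "j \<le> k"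
    using \<open>i \<in> {j..<k}\<close> by simp
  let ?excess = "\<lambda>i. f (Suc i) - f i - 1"
  let ?drift = "\<lambda>i. f i - int i"
  have "(\<Sum>i = j..<k. ?excess i) = (\<Sum>i = j..<k. ?drift (Suc i) - ?drift i)"
    by (rule sum.cong) simp_all
  also have "\<dots> = ?drift k - ?drift j"
    using \<open>j \<le> k\<close> by (rule sum_Suc_diff')
  also have "\<dots> = f k - f j - int (k - j)"
    using \<open>j \<le> k\<close> by simp
  finally have "(\<Sum>i = j..<k. ?excess i) = f k - f j - int (k - j)" .
  moreover have "(\<Sum>i = j..<k. ?excess i) \<ge> 0"
    using increasing by (intro sum_nonneg) (simp add: int_one_le_iff_zero_less)
  ultimately have "(\<Sum>i = j..<k. ?excess i) = 0"
    using rise by linarith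
  then have "\<forall>i\<in>{j..<k}. ?excess i = 0"
    using increasing by (subst (asm) sum_nonneg_eq_0_iff) (auto simp: int_one_le_iff_zero_less)
  then show ?thesis
    using \<open>i \<in> {j..<k}\<close> by fastforce
qed

lemma deriv_values_eq_image:
  "deriv_values n pi = (\<lambda>i. pi (Suc i) - pi i) ` {1..<n}"
  unfolding deriv_values_def by (force simp: image_def)

lemma is_perm_step_nonzero:
  assumes "is_perm n pi" and "i \<in> {1..<n}"
  shows "pi (Suc i) \<noteq> pi i"
  using assms unfolding is_perm_def bij_betw_def by (auto dest: inj_onD)

lemma is_perm_values:
  assumes "is_perm n pi" and "i \<in> {1..n}"
  shows "pi i \<in> {1..int n}"
  using assms unfolding is_perm_def bij_betw_def by auto

lemma is_perm_unit_if_dvd_steps: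
  assumes perm: "is_perm n pi" and "n \<ge> 2"
    and steps: "\<And>i. i \<in> {1..<n} \<Longrightarrow> d dvd pi (Suc i) - pi i"
  shows "is_unit d"
proof -
  have "1 \<in> pi ` {1..n}" "2 \<in> pi ` {1..n}"
    using perm \<open>n \<ge> 2\<close> unfolding is_perm_def bij_betw_def by auto
  then obtain a b where "a \<in> {1..n}" "pi a = 1" "b \<in> {1..n}" "pi b = 2"
    unfolding image_iff by (metis (no_types))
  moreover have "d dvd pi b - pi a"
    using steps \<open>a \<in> {1..n}\<close> \<open>b \<in> {1..n}\<close>
    by (rule dvd_diff_if_dvd_steps[where j = 1 and k = n])
  ultimately show ?thesis
    by simp
qed

lemma is_perm_steps_eq_if_same_sign:
  assumes perm: "is_perm n pi" and "i \<in> {1..<n}" and "i' \<in> {1..<n}"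
    and same_sign: "(\<forall>j\<in>{1..<n}. pi j < pi (Suc j)) \<or> (\<forall>j\<in>{1..<n}. pi (Suc j) < pi j)"
  shows "pi (Suc i) - pi i = pi (Suc i') - pi i'"
proof -
  have "pi 1 \<in> {1..int n}" "pi n \<in> {1..int n}"
    using is_perm_values[OF perm] \<open>i \<in> {1..<n}\<close> by auto
  then have span: "pi n - pi 1 \<le> int (n - 1)" "- pi n - - pi 1 \<le> int (n - 1)"
    by auto
  from same_sign show ?thesis
  proof
    assume "\<forall>j\<in>{1..<n}. pi j < pi (Suc j)"
    then show ?thesis
      using unit_step_if_increasing_steps[OF span(1)] assms(2,3) by simp
  next
    assume "\<forall>j\<in>{1..<n}. pi (Suc j) < pi j"
    then have down: "- pi (Suc j) = - pi j + 1" if "j \<in> {1..<n}" for j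
      using unit_step_if_increasing_steps[where f = "\<lambda>i. - pi i", OF span(2)] that by simp
    show ?thesis
      using down[OF assms(2)] down[OF assms(3)] by linarith
  qed
qed

theorem lemma2p4:
  fixes n :: nat and p q :: int and pi :: "nat \<Rightarrow> int"
  assumes "n \<ge> 3"
    and "p \<noteq> q"
    and "is_perm n pi"
    and "deriv_values n pi = {p, q}"
  shows "((p < 0 \<and> 0 < q) \<or> (q < 0 \<and> 0 < p)) \<and> coprime p q"
proof -
  have steps: "pi (Suc i) - pi i \<in> {p, q}" if "i \<in> {1..<n}" for i
    using that assms(4) by (auto simp: deriv_values_eq_image)
  obtain ip iq where ip: "ip \<in> {1..<n}" "p = pi (Suc ip) - pi ip"
    and iq: "iq \<in> {1..<n}" "q = pi (Suc iq) - pi iq"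
    using assms(4) unfolding deriv_values_eq_image by blast
  have "\<not> (0 < p \<and> 0 < q)" "\<not> (p < 0 \<and> q < 0)"
    using is_perm_steps_eq_if_same_sign[OF assms(3) ip(1) iq(1)] steps ip iq assms(2)
    by fastforce+
  moreover have "p \<noteq> 0" "q \<noteq> 0"
    using ip iq is_perm_step_nonzero[OF assms(3)] by auto
  ultimately have "(p < 0 \<and> 0 < q) \<or> (q < 0 \<and> 0 < p)"
    by linarith
  moreover have "coprime p q"
    using is_perm_unit_if_dvd_steps[OF assms(3), of "gcd p q"] steps assms(1) by force
  ultimately show ?thesis ..
qed

end
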